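(* Let $T$ be the monad on $\mathsf{Set}$ generated by an algebraic theory (a signature of operation symbols with finite arities together with a set of equations) none of whose equations is a drop equation. Then the underlying functor of $T$ preserves pullbacks of monomorphisms (in particular it preserves monomorphisms). Consequently, if $\rho$ is an uncountable regular ordinal, then $T$ preserves $\rho^{\mathrm{op}}$-indexed limits, i.e. for every functor $X:\rho^{\mathrm{op}}\to\mathsf{Set}$ the canonical map $T(\lim X) \to \lim T(X)$ is a bijection.
   Context: A signature is a set $\Sigma$ of operation symbols, each with an arity $n \in \mathbb{N}$. For a set $X$, the set $\mathsf{Tm}(X)$ of terms is defined inductively: each $x\in X$ is a term, and if $\mathsf{op}\in\Sigma$ has arity $n$ and $t_1,\dots,t_n \in \mathsf{Tm}(X)$ then $\mathsf{op}(t_1,\dots,t_n) \in \mathsf{Tm}(X)$. An equation is a pair $(t,s)$ of terms in some $\mathsf{Tm}(X)$; an algebraic theory is a signature with a set of equations. The generated monad is $T(X) = \mathsf{Tm}(X)/\sim$, where $\sim$ is the smallest congruence on $\mathsf{Tm}(X)$ containing all substitution instances of the equations; $T$ acts on maps by substituting variables. An equation $(t,s)$ is a drop equation if the sets of free variables of $t$ and $s$ differ. $T$ preserves pullbacks of monomorphisms if it maps every pullback square in $\mathsf{Set}$ one of whose legs is a monomorphism (specifically, pullbacks of an inclusion $Z \subseteq Y$ along any map $f: X\to Y$) to a pullback square. An ordinal $\rho$ is regular if it is a limit ordinal equal to its own cofinality. *)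

theory Defs
  imports Main "HOL-Library.Countable_Set"
begin

datatype ('f, vars_tm: 'x) tm = Var 'x | Op 'f "('f, 'x) tm list"

fun wf_tm :: "('f \<Rightarrow> nat) \<Rightarrow> ('f, 'x) tm \<Rightarrow> bool" where
  "wf_tm ar (Var x) = True"
| "wf_tm ar (Op f ts) = (length ts = ar f \<and> (\<forall>t\<in>set ts. wf_tm ar t))"

definition Tm :: "('f \<Rightarrow> nat) \<Rightarrow> 'x set \<Rightarrow> ('f, 'x) tm set" where
  "Tm ar X = {t. wf_tm ar t \<and> vars_tm t \<subseteq> X}"

fun subst :: "('v \<Rightarrow> ('f, 'x) tm) \<Rightarrow> ('f, 'v) tm \<Rightarrow> ('f, 'x) tm" where
  "subst \<sigma> (Var v) = \<sigma> v"
| "subst \<sigma> (Op f ts) = Op f (map (subst \<sigma>) ts)"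

definition drop_equation :: "('f, 'v) tm \<times> ('f, 'v) tm \<Rightarrow> bool" where
  "drop_equation e = (vars_tm (fst e) \<noteq> vars_tm (snd e))"

inductive_set teq :: "('f \<Rightarrow> nat) \<Rightarrow> (('f, 'v) tm \<times> ('f, 'v) tm) set \<Rightarrow> 'x set
    \<Rightarrow> (('f, 'x) tm \<times> ('f, 'x) tm) set"
  for ar E X where
  refl: "t \<in> Tm ar X \<Longrightarrow> (t, t) \<in> teq ar E X"
| sym: "(s, t) \<in> teq ar E X \<Longrightarrow> (t, s) \<in> teq ar E X"
| trans: "(s, t) \<in> teq ar E X \<Longrightarrow> (t, u) \<in> teq ar E X \<Longrightarrow> (s, u) \<in> teq ar E X"
| inst: "(l, r) \<in> E \<Longrightarrow> (\<forall>v \<in> vars_tm l \<union> vars_tm r. \<sigma> v \<in> Tm ar X)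
          \<Longrightarrow> (subst \<sigma> l, subst \<sigma> r) \<in> teq ar E X"
| cong: "length ts = ar f \<Longrightarrow> list_all2 (\<lambda>s t. (s, t) \<in> teq ar E X) ss ts
          \<Longrightarrow> (Op f ss, Op f ts) \<in> teq ar E X"

text \<open>The generated monad: T(X) = Tm(X)/~ ; on maps, T acts by renaming variables.\<close>
definition Tobj :: "('f \<Rightarrow> nat) \<Rightarrow> (('f, 'v) tm \<times> ('f, 'v) tm) set \<Rightarrow> 'x set
    \<Rightarrow> ('f, 'x) tm set set" where
  "Tobj ar E X = Tm ar X // teq ar E X"

definition Tmap :: "('f \<Rightarrow> nat) \<Rightarrow> (('f, 'v) tm \<times> ('f, 'v) tm) set \<Rightarrow> 'y set
    \<Rightarrow> ('x \<Rightarrow> 'y) \<Rightarrow> ('f, 'x) tm set \<Rightarrow> ('f, 'y) tm set" where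
  "Tmap ar E Y f c = teq ar E Y `` (map_tm id f ` c)"

text \<open>An ordinal is represented by a well-order r (on Field r).
  K is cofinal in r if every element of r lies below some element of K.\<close>
definition cofinal_in :: "'i set \<Rightarrow> 'i rel \<Rightarrow> bool" where
  "cofinal_in K r = (K \<subseteq> Field r \<and> (\<forall>a\<in>Field r. \<exists>b\<in>K. (a, b) \<in> r))"

definition limit_ordinal :: "'i rel \<Rightarrow> bool" where
  "limit_ordinal r = (Well_order r \<and> Field r \<noteq> {} \<and>
     (\<forall>a\<in>Field r. \<exists>b\<in>Field r. (a, b) \<in> r \<and> a \<noteq> b))"

text \<open>Regular: a limit ordinal equal to its cofinality, where the cofinality is the least
  order type of a cofinal subset; since every subset has order type \<le> r, this says that every
  cofinal subset has order type r.\<close>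
definition regular_ordinal :: "'i rel \<Rightarrow> bool" where
  "regular_ordinal r = (limit_ordinal r \<and>
     (\<forall>K. cofinal_in K r \<longrightarrow> (Restr r K, r) \<in> ordIso))"

text \<open>A functor D : \<rho>^op \<rightarrow> Set: sets D a for a \<in> Field r and maps M a b : D b \<rightarrow> D a for (a,b) \<in> r.\<close>
definition op_diagram :: "'i rel \<Rightarrow> ('i \<Rightarrow> 'x set) \<Rightarrow> ('i \<Rightarrow> 'i \<Rightarrow> 'x \<Rightarrow> 'x) \<Rightarrow> bool" where
  "op_diagram r D M =
    ((\<forall>a b. (a, b) \<in> r \<longrightarrow> (\<forall>x\<in>D b. M a b x \<in> D a)) \<and>
     (\<forall>a\<in>Field r. \<forall>x\<in>D a. M a a x = x) \<and>
     (\<forall>a b c. (a, b) \<in> r \<longrightarrow> (b, c) \<in> r \<longrightarrow> (\<forall>x\<in>D c. M a b (M b c x) = M a c x)))"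

text \<open>The limit in Set: compatible families (extensional outside Field r).\<close>
definition set_lim :: "'i rel \<Rightarrow> ('i \<Rightarrow> 'x set) \<Rightarrow> ('i \<Rightarrow> 'i \<Rightarrow> 'x \<Rightarrow> 'x) \<Rightarrow> ('i \<Rightarrow> 'x) set" where
  "set_lim r D M = {x. (\<forall>a\<in>Field r. x a \<in> D a) \<and> (\<forall>a b. (a, b) \<in> r \<longrightarrow> M a b (x b) = x a)
                      \<and> (\<forall>a. a \<notin> Field r \<longrightarrow> x a = undefined)}"

end

theory Submission
  imports Defs
begin

text \<open>Without drop equations, s ~ t forces vars s = vars t, and a derivation of s ~ t can be
  carried out inside any variable set containing vars s. Hence T g reflects ~ along maps that are
  injective on the variables involved, and a class of T Y whose variables lie in Z \<subseteq> Y already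
  lives in T Z; this gives preservation of monomorphisms and of pullbacks along inclusions.

  For a \<rho>^op-indexed limit L, the finitely many variables of a term over L are separated at a
  single stage, which makes T L \<rightarrow> lim T(D a) injective. For surjectivity, pick representatives
  t a of a compatible family. Their variable sets form an inverse system of finite sets with
  surjective bonding maps, so their cardinalities increase and, as \<rho> has uncountable
  cofinality, become constant from some stage a0 on. Beyond a0 the bonding maps are bijections,
  so every variable of t a0 extends to a thread in L, and renaming the variables of t a0 by these
  threads gives a preimage.\<close>

abbreviation rename_tm :: "('x \<Rightarrow> 'y) \<Rightarrow> ('f, 'x) tm \<Rightarrow> ('f, 'y) tm" where
  "rename_tm f \<equiv> map_tm id f"

lemma finite_vars_tm [simp]: "finite (vars_tm t)"
  by (induction t) auto

lemma vars_tm_rename [simp]: "vars_tm (rename_tm f t) = f ` vars_tm t"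
  by (simp add: tm.set_map)

lemma rename_tm_id [simp]: "rename_tm id t = t"
  by (simp add: tm.map_id)

lemma rename_tm_rename_tm [simp]: "rename_tm g (rename_tm f t) = rename_tm (\<lambda>x. g (f x)) t"
  by (induction t) auto

lemma wf_tm_rename [simp]: "wf_tm ar (rename_tm f t) = wf_tm ar t"
  by (induction t) auto

lemma rename_in_Tm: "s \<in> Tm ar X \<Longrightarrow> f ` vars_tm s \<subseteq> Y \<Longrightarrow> rename_tm f s \<in> Tm ar Y"
  by (auto simp: Tm_def)

lemma Tm_mono: "s \<in> Tm ar X \<Longrightarrow> X \<subseteq> Y \<Longrightarrow> s \<in> Tm ar Y"
  by (auto simp: Tm_def)

lemma vars_tm_subst: "vars_tm (subst \<sigma> t) = (\<Union>v\<in>vars_tm t. vars_tm (\<sigma> v))"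
  by (induction t) auto

lemma wf_tm_subst: "wf_tm ar t \<Longrightarrow> (\<forall>v\<in>vars_tm t. wf_tm ar (\<sigma> v)) \<Longrightarrow> wf_tm ar (subst \<sigma> t)"
  by (induction t) auto

lemma rename_subst: "rename_tm f (subst \<sigma> t) = subst (rename_tm f \<circ> \<sigma>) t"
  by (induction t) auto

lemma teq_rename:
  assumes "(s, t) \<in> teq ar E X" and "f ` X \<subseteq> Y"
  shows "(rename_tm f s, rename_tm f t) \<in> teq ar E Y"
  using assms(1)
proof (induction rule: teq.induct)
  case (refl t)
  then have "rename_tm f t \<in> Tm ar Y" using assms(2) by (auto intro: rename_in_Tm simp: Tm_def)
  then show ?case by (rule teq.refl)
next
  case (inst l r \<sigma>)
  have "\<forall>v\<in>vars_tm l \<union> vars_tm r. (rename_tm f \<circ> \<sigma>) v \<in> Tm ar Y"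
    using inst.hyps(2) assms(2) by (auto intro: rename_in_Tm simp: Tm_def)
  then have "(subst (rename_tm f \<circ> \<sigma>) l, subst (rename_tm f \<circ> \<sigma>) r) \<in> teq ar E Y"
    by (rule teq.inst[OF inst.hyps(1)])
  then show ?case by (simp only: rename_subst)
next
  case (cong ts g ss)
  then show ?case by (auto intro!: teq.cong simp: list_all2_conv_all_nth)
qed (blast intro: teq.sym teq.trans)+

locale wf_equations =
  fixes ar :: "'f \<Rightarrow> nat" and E :: "(('f, 'v) tm \<times> ('f, 'v) tm) set"
  assumes eqs_wf: "\<forall>(l, r) \<in> E. wf_tm ar l \<and> wf_tm ar r"
begin

abbreviation cls :: "'x set \<Rightarrow> ('f, 'x) tm \<Rightarrow> ('f, 'x) tm set" where
  "cls X s \<equiv> teq ar E X `` {s}"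

lemma teq_in_Tm: "(s, t) \<in> teq ar E X \<Longrightarrow> s \<in> Tm ar X \<and> t \<in> Tm ar X"
proof (induction rule: teq.induct)
  case (inst l r \<sigma>)
  then show ?case using eqs_wf by (auto simp: Tm_def vars_tm_subst intro!: wf_tm_subst)
next
  case (cong ts f ss)
  then show ?case by (fastforce simp: Tm_def list_all2_conv_all_nth in_set_conv_nth)
qed auto

lemma equiv_teq: "equiv (Tm ar X) (teq ar E X)"
  unfolding equiv_def refl_on_def sym_def trans_def
  using teq_in_Tm by (auto intro: teq.refl teq.sym teq.trans)

lemma cls_eq_iff: "s \<in> Tm ar X \<Longrightarrow> t \<in> Tm ar X \<Longrightarrow> cls X s = cls X t \<longleftrightarrow> (s, t) \<in> teq ar E X"
  by (rule eq_equiv_class_iff[OF equiv_teq])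

lemma Tobj_iff: "c \<in> Tobj ar E X \<longleftrightarrow> (\<exists>s\<in>Tm ar X. c = cls X s)"
  by (auto simp: Tobj_def quotient_def)

lemma cls_in_Tobj: "s \<in> Tm ar X \<Longrightarrow> cls X s \<in> Tobj ar E X"
  by (auto simp: Tobj_iff)

lemma Tmap_cls:
  assumes "s \<in> Tm ar X" and "f ` X \<subseteq> Y"
  shows "Tmap ar E Y f (cls X s) = cls Y (rename_tm f s)"
proof -
  have "(rename_tm f s, u) \<in> teq ar E Y" if "(s, t) \<in> teq ar E X" "(rename_tm f t, u) \<in> teq ar E Y"
    for t u
    using teq.trans[OF teq_rename[OF that(1) assms(2)] that(2)] .
  then have "Tmap ar E Y f (cls X s) \<subseteq> cls Y (rename_tm f s)"
    by (auto simp: Tmap_def)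
  moreover have "cls Y (rename_tm f s) \<subseteq> Tmap ar E Y f (cls X s)"
    using teq.refl[OF assms(1)] by (auto simp: Tmap_def)
  ultimately show ?thesis by blast
qed

end

section \<open>Theories without drop equations\<close>

locale nondrop_theory = wf_equations +
  assumes no_drop: "\<forall>e \<in> E. \<not> drop_equation e"
begin

lemma equation_vars_eq: "(l, r) \<in> E \<Longrightarrow> vars_tm l = vars_tm r"
  using no_drop by (auto simp: drop_equation_def)

lemma teq_vars: "(s, t) \<in> teq ar E X \<Longrightarrow> vars_tm s = vars_tm t"
proof (induction rule: teq.induct)
  case (inst l r \<sigma>)
  then show ?case by (simp add: equation_vars_eq vars_tm_subst)
next
  case (cong ts f ss)
  then have "map vars_tm ss = map vars_tm ts"
    by (auto simp: list_all2_conv_all_nth intro!: nth_equalityI)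
  then have "vars_tm ` set ss = vars_tm ` set ts"
    by (metis list.set_map)
  then show ?case by simp
qed auto

lemma teq_any_carrier:
  "(s, t) \<in> teq ar E X \<Longrightarrow> vars_tm s \<subseteq> W \<Longrightarrow> (s, t) \<in> teq ar E W"
proof (induction rule: teq.induct)
  case (refl t)
  then show ?case by (auto simp: Tm_def intro: teq.refl)
next
  case (sym s t)
  then show ?case using teq_vars by (metis teq.sym)
next
  case (trans s t u)
  then show ?case using teq_vars by (metis teq.trans)
next
  case (inst l r \<sigma>)
  then have "\<forall>v\<in>vars_tm l \<union> vars_tm r. \<sigma> v \<in> Tm ar W"
    by (auto simp: Tm_def vars_tm_subst equation_vars_eq)
  then show ?case by (rule teq.inst[OF inst.hyps(1)])
next
  case (cong ts f ss)
  have "vars_tm (ss ! i) \<subseteq> W" if "i < length ss" for i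
    using cong.prems nth_mem[OF that] by auto
  with cong.IH have "list_all2 (\<lambda>s t. (s, t) \<in> teq ar E W) ss ts"
    by (auto simp: list_all2_conv_all_nth)
  with cong.hyps(1) show ?case by (rule teq.cong)
qed

lemma teq_rename_on_vars:
  assumes "(s, t) \<in> teq ar E X" and "f ` vars_tm s \<subseteq> Y"
  shows "(rename_tm f s, rename_tm f t) \<in> teq ar E Y"
  using teq_rename[OF teq_any_carrier[OF assms(1) order_refl] assms(2)] .

lemma teq_rename_inj_reflect:
  assumes "(rename_tm g s, rename_tm g t) \<in> teq ar E Y" and "inj_on g W"
    and "vars_tm s \<subseteq> W" and "vars_tm t \<subseteq> W"
  shows "(s, t) \<in> teq ar E W"
proof -
  let ?h = "inv_into W g"
  have "?h ` vars_tm (rename_tm g s) \<subseteq> W"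
    using assms(2,3) by auto
  from teq_rename_on_vars[OF assms(1) this]
  have "(rename_tm (\<lambda>x. ?h (g x)) s, rename_tm (\<lambda>x. ?h (g x)) t) \<in> teq ar E W"
    by simp
  moreover have "rename_tm (\<lambda>x. ?h (g x)) s = s" "rename_tm (\<lambda>x. ?h (g x)) t = t"
    using assms(2-4) by (auto intro!: tm.map_ident_strong)
  ultimately show ?thesis by simp
qed

lemma Tmap_inj_on:
  assumes "g ` X \<subseteq> Y" and "inj_on g X"
  shows "inj_on (Tmap ar E Y g) (Tobj ar E X)"
proof (rule inj_onI)
  fix c1 c2
  assume "c1 \<in> Tobj ar E X" "c2 \<in> Tobj ar E X" and eq: "Tmap ar E Y g c1 = Tmap ar E Y g c2"
  then obtain s1 s2 where s: "s1 \<in> Tm ar X" "c1 = cls X s1" "s2 \<in> Tm ar X" "c2 = cls X s2"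
    by (auto simp: Tobj_iff)
  have "cls Y (rename_tm g s1) = cls Y (rename_tm g s2)"
    using eq s assms(1) by (simp add: Tmap_cls)
  moreover have "rename_tm g s1 \<in> Tm ar Y" "rename_tm g s2 \<in> Tm ar Y"
    using s assms(1) by (auto intro: rename_in_Tm simp: Tm_def)
  ultimately have "(rename_tm g s1, rename_tm g s2) \<in> teq ar E Y"
    by (simp add: cls_eq_iff)
  then have "(s1, s2) \<in> teq ar E X"
    using s assms(2) by (auto intro: teq_rename_inj_reflect simp: Tm_def)
  then show "c1 = c2" using s by (simp add: cls_eq_iff)
qed

lemma Tmap_pullback:
  assumes fXY: "f ` X \<subseteq> Y" and ZY: "Z \<subseteq> Y"
  defines "P \<equiv> {x \<in> X. f x \<in> Z}"
  shows "bij_betw (\<lambda>c. (Tmap ar E X id c, Tmap ar E Z f c)) (Tobj ar E P)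
           {(a, b). a \<in> Tobj ar E X \<and> b \<in> Tobj ar E Z \<and> Tmap ar E Y f a = Tmap ar E Y id b}"
proof -
  have PX: "P \<subseteq> X" and fPZ: "f ` P \<subseteq> Z" by (auto simp: P_def)
  have cls_P: "Tmap ar E X id (cls P s) = cls X s" "Tmap ar E Z f (cls P s) = cls Z (rename_tm f s)"
    if "s \<in> Tm ar P" for s
    using that PX fPZ by (simp_all add: Tmap_cls)
  show ?thesis
  proof (rule bij_betwI')
    fix c1 c2 assume "c1 \<in> Tobj ar E P" "c2 \<in> Tobj ar E P"
    then show "((Tmap ar E X id c1, Tmap ar E Z f c1) = (Tmap ar E X id c2, Tmap ar E Z f c2))
        \<longleftrightarrow> c1 = c2"
      using Tmap_inj_on[of id P X] PX by (auto dest: inj_onD)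
  next
    fix c assume "c \<in> Tobj ar E P"
    then obtain s where s: "s \<in> Tm ar P" "c = cls P s" by (auto simp: Tobj_iff)
    have "s \<in> Tm ar X" "rename_tm f s \<in> Tm ar Z"
      using s PX fPZ by (auto intro: Tm_mono rename_in_Tm simp: Tm_def)
    then show "(Tmap ar E X id c, Tmap ar E Z f c) \<in>
        {(a, b). a \<in> Tobj ar E X \<and> b \<in> Tobj ar E Z \<and> Tmap ar E Y f a = Tmap ar E Y id b}"
      using s fXY ZY by (simp add: cls_P cls_in_Tobj Tmap_cls)
  next
    fix ab
    assume "ab \<in> {(a, b). a \<in> Tobj ar E X \<and> b \<in> Tobj ar E Z \<and> Tmap ar E Y f a = Tmap ar E Y id b}"
    then obtain s t where st: "s \<in> Tm ar X" "t \<in> Tm ar Z" "ab = (cls X s, cls Z t)"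
      and eq: "Tmap ar E Y f (cls X s) = Tmap ar E Y id (cls Z t)"
      by (auto simp: Tobj_iff)
    have in_Y: "rename_tm f s \<in> Tm ar Y" "t \<in> Tm ar Y"
      using st fXY ZY by (auto intro: Tm_mono rename_in_Tm simp: Tm_def)
    have "cls Y (rename_tm f s) = cls Y t"
      using eq st fXY ZY by (simp add: Tmap_cls)
    then have st_Y: "(rename_tm f s, t) \<in> teq ar E Y"
      using in_Y by (simp add: cls_eq_iff)
    then have f_vars: "f ` vars_tm s \<subseteq> Z"
      using teq_vars st(2) by (fastforce simp: Tm_def)
    then have sP: "s \<in> Tm ar P"
      using st(1) by (auto simp: Tm_def P_def)
    have "(rename_tm f s, t) \<in> teq ar E Z"
      using teq_any_carrier[OF st_Y] f_vars by simp
    then have "cls Z (rename_tm f s) = cls Z t"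
      using rename_in_Tm[OF st(1) f_vars] st(2) by (simp add: cls_eq_iff)
    then have "ab = (Tmap ar E X id (cls P s), Tmap ar E Z f (cls P s))"
      using st(3) by (simp add: cls_P[OF sP])
    then show "\<exists>c\<in>Tobj ar E P. ab = (Tmap ar E X id c, Tmap ar E Z f c)"
      using cls_in_Tobj[OF sP] by blast
  qed
qed

end

section \<open>Well-orders of uncountable cofinality\<close>

lemma well_order_finite_upper_bound:
  assumes "Well_order r" and "Field r \<noteq> {}" and "finite A" and "A \<subseteq> Field r"
  shows "\<exists>a\<in>Field r. \<forall>b\<in>A. (b, a) \<in> r"
  using assms(3,4)
proof (induction A rule: finite_induct)
  case empty
  then show ?case using assms(2) by blast
next
  case (insert x A)
  interpret wo_rel r using assms(1) by (rule wo_rel.intro)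
  obtain a where a: "a \<in> Field r" "\<forall>b\<in>A. (b, a) \<in> r"
    using insert by auto
  have x: "x \<in> Field r" using insert.prems by simp
  have "max2 x a \<in> Field r" using max2_among[OF x a(1)] x a(1) by auto
  moreover have "\<forall>b\<in>insert x A. (b, max2 x a) \<in> r"
    using max2_greater[OF x a(1)] a(2) TRANS by (auto dest: transD)
  ultimately show ?case by blast
qed

lemma regular_uncountable_no_countable_cofinal:
  assumes "regular_ordinal r" and "\<not> countable (Field r)" and "cofinal_in K r"
  shows "\<not> countable K"
proof
  assume "countable K"
  then have "countable (Field (Restr r K))"
    by (rule countable_subset[OF Field_Restr_subset])
  moreover obtain f where "bij_betw f (Field (Restr r K)) (Field r)"
    using assms(1,3) by (auto simp: regular_ordinal_def ordIso_def iso_def)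
  ultimately show False
    using assms(2) by (metis bij_betw_imp_surj_on countable_image)
qed

lemma regular_uncountable_mono_nat_eventually_const:
  fixes n :: "'i \<Rightarrow> nat"
  assumes reg: "regular_ordinal r" and unc: "\<not> countable (Field r)"
    and mono: "\<And>a b. (a, b) \<in> r \<Longrightarrow> n a \<le> n b"
  shows "\<exists>a0\<in>Field r. \<forall>b. (a0, b) \<in> r \<longrightarrow> n b = n a0"
proof -
  interpret wo_rel r using reg by (simp add: regular_ordinal_def limit_ordinal_def wo_rel_def)
  have bounded: "\<exists>k. \<forall>a\<in>Field r. n a < k"
  proof (rule ccontr)
    assume "\<nexists>k. \<forall>a\<in>Field r. n a < k"
    then obtain a_above where a_above: "\<And>k. a_above k \<in> Field r \<and> k \<le> n (a_above k)"
      by (metis not_less)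
    have "cofinal_in (range a_above) r"
      unfolding cofinal_in_def
    proof (intro conjI ballI)
      fix a assume a: "a \<in> Field r"
      have "(a_above (Suc (n a)), a) \<notin> r"
        using mono a_above[of "Suc (n a)"] by (meson not_less_eq_eq)
      then have "(a, a_above (Suc (n a))) \<in> r"
        using TOTALS a a_above by blast
      then show "\<exists>b\<in>range a_above. (a, b) \<in> r" by blast
    qed (use a_above in blast)
    then show False
      using regular_uncountable_no_countable_cofinal[OF reg unc] by blast
  qed
  then have fin: "finite (n ` Field r)"
    by (auto simp: finite_nat_set_iff_bounded)
  moreover have "Field r \<noteq> {}" using unc by auto
  ultimately have "Max (n ` Field r) \<in> n ` Field r" by simp
  then obtain a0 where a0: "a0 \<in> Field r" "n a0 = Max (n ` Field r)"
    by (metis imageE)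
  have "n b = n a0" if "(a0, b) \<in> r" for b
    using mono[OF that] Max_ge[OF fin imageI[OF FieldI2[OF that]]] a0(2) by simp
  with a0(1) show ?thesis by blast
qed

lemma regular_uncountable_images_eventually_inj:
  assumes reg: "regular_ordinal r" and unc: "\<not> countable (Field r)"
    and fin: "\<And>a. a \<in> Field r \<Longrightarrow> finite (V a)"
    and img: "\<And>a b. (a, b) \<in> r \<Longrightarrow> M a b ` V b = V a"
  shows "\<exists>a0\<in>Field r. \<forall>a. (a0, a) \<in> r \<longrightarrow> inj_on (M a0 a) (V a)"
proof -
  have "card (V a) \<le> card (V b)" if "(a, b) \<in> r" for a b
    using img[OF that] card_image_le[OF fin[OF FieldI2[OF that]]] by metis
  then obtain a0 where a0: "a0 \<in> Field r" "\<And>a. (a0, a) \<in> r \<Longrightarrow> card (V a) = card (V a0)"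
    using regular_uncountable_mono_nat_eventually_const[OF reg unc, of "\<lambda>a. card (V a)"] by blast
  have "inj_on (M a0 a) (V a)" if "(a0, a) \<in> r" for a
    using img[OF that] a0(2)[OF that] fin[OF FieldI2[OF that]] by (simp add: inj_on_iff_eq_card)
  with a0(1) show ?thesis by blast
qed

lemma set_limI:
  assumes "\<And>a. a \<in> Field r \<Longrightarrow> x a \<in> D a" and "\<And>a b. (a, b) \<in> r \<Longrightarrow> M a b (x b) = x a"
    and "\<And>a. a \<notin> Field r \<Longrightarrow> x a = undefined"
  shows "x \<in> set_lim r D M"
  using assms by (simp add: set_lim_def)

lemma set_limD:
  assumes "x \<in> set_lim r D M"
  shows "\<And>a. a \<in> Field r \<Longrightarrow> x a \<in> D a" and "\<And>a b. (a, b) \<in> r \<Longrightarrow> M a b (x b) = x a"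
    and "\<And>a. a \<notin> Field r \<Longrightarrow> x a = undefined"
  using assms by (simp_all add: set_lim_def)

lemma set_lim_eqI:
  assumes "x \<in> set_lim r D M" and "y \<in> set_lim r D M" and "\<And>a. a \<in> Field r \<Longrightarrow> x a = y a"
  shows "x = y"
proof
  fix a
  show "x a = y a" using assms by (cases "a \<in> Field r") (auto simp: set_lim_def)
qed

lemma set_lim_inj_on_proj_finite:
  assumes "Well_order r" and "Field r \<noteq> {}" and "finite V" and V: "V \<subseteq> set_lim r D M"
  shows "\<exists>a\<in>Field r. inj_on (\<lambda>x. x a) V"
proof -
  let ?pairs = "{(x, y). x \<in> V \<and> y \<in> V \<and> x \<noteq> y}"
  have "\<forall>p\<in>?pairs. \<exists>a. a \<in> Field r \<and> fst p a \<noteq> snd p a"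
  proof (intro ballI, rule ccontr)
    fix p assume p: "p \<in> ?pairs" and "\<nexists>a. a \<in> Field r \<and> fst p a \<noteq> snd p a"
    moreover have "fst p \<in> set_lim r D M" "snd p \<in> set_lim r D M" using p V by auto
    ultimately have "fst p = snd p" using set_lim_eqI[of "fst p" r D M "snd p"] by blast
    then show False using p by auto
  qed
  then have "\<exists>sep. \<forall>p\<in>?pairs. sep p \<in> Field r \<and> fst p (sep p) \<noteq> snd p (sep p)"
    by (rule bchoice)
  then obtain sep where sep: "\<forall>p\<in>?pairs. sep p \<in> Field r \<and> fst p (sep p) \<noteq> snd p (sep p)" ..
  have "finite ?pairs"
    using assms(3) by (auto intro: finite_subset[of _ "V \<times> V"])
  then obtain a where a: "a \<in> Field r" "\<And>p. p \<in> ?pairs \<Longrightarrow> (sep p, a) \<in> r"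
    using well_order_finite_upper_bound[OF assms(1,2), of "sep ` ?pairs"] sep by auto
  have "x = y" if "x \<in> V" "y \<in> V" "x a = y a" for x y
  proof (rule ccontr)
    assume "x \<noteq> y"
    then have xy: "(x, y) \<in> ?pairs" using that by simp
    then have "x (sep (x, y)) = M (sep (x, y)) a (x a)" "y (sep (x, y)) = M (sep (x, y)) a (y a)"
      using a(2) that(1,2) V by (auto simp: set_lim_def)
    then show False using bspec[OF sep xy] that(3) by simp
  qed
  with a(1) show ?thesis by (auto intro: inj_onI)
qed

lemma set_lim_extend_final_segment:
  assumes wo: "Well_order r" and od: "op_diagram r D M" and a0: "a0 \<in> Field r"
    and x_in: "\<And>a. (a0, a) \<in> r \<Longrightarrow> x a \<in> D a"
    and x_compat: "\<And>a b. (a0, a) \<in> r \<Longrightarrow> (a, b) \<in> r \<Longrightarrow> M a b (x b) = x a"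
  shows "(\<lambda>a. if a \<in> Field r then if (a0, a) \<in> r then x a else M a a0 (x a0) else undefined)
    \<in> set_lim r D M" (is "?y \<in> _")
proof (rule set_limI)
  interpret wo_rel r using wo by (rule wo_rel.intro)
  have M_into: "\<And>a b x. (a, b) \<in> r \<Longrightarrow> x \<in> D b \<Longrightarrow> M a b x \<in> D a"
    and M_comp: "\<And>a b c x. (a, b) \<in> r \<Longrightarrow> (b, c) \<in> r \<Longrightarrow> x \<in> D c \<Longrightarrow> M a b (M b c x) = M a c x"
    using od by (auto simp: op_diagram_def)
  have below: "(a, a0) \<in> r" if "a \<in> Field r" "(a0, a) \<notin> r" for a
    using TOTALS that a0 by blast
  have a0a0: "(a0, a0) \<in> r" using REFL a0 by (auto simp: refl_on_def)
  show "?y a \<in> D a" if "a \<in> Field r" for a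
    using that x_in below[OF that] M_into x_in[OF a0a0] by auto
  show "M a b (?y b) = ?y a" if ab: "(a, b) \<in> r" for a b
  proof -
    have a: "a \<in> Field r" and b: "b \<in> Field r" using ab by (auto intro: FieldI1 FieldI2)
    consider "(a0, a) \<in> r" | "(a0, a) \<notin> r" "(a0, b) \<in> r" | "(a0, a) \<notin> r" "(a0, b) \<notin> r"
      by blast
    then show ?thesis
    proof cases
      case 1
      then show ?thesis using x_compat ab TRANS a b by (auto dest: transD)
    next
      case 2
      have "M a b (x b) = M a a0 (M a0 b (x b))"
        using M_comp[OF below[OF a 2(1)] 2(2)] x_in[OF 2(2)] by simp
      then show ?thesis using x_compat[OF a0a0 2(2)] a b 2 by simp
    next
      case 3
      then show ?thesis using M_comp[OF ab below[OF b 3(2)]] x_in[OF a0a0] a b by auto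
    qed
  qed
  show "?y a = undefined" if "a \<notin> Field r" for a
    using that by simp
qed

lemma set_lim_thread:
  assumes wo: "Well_order r" and od: "op_diagram r D M" and a0: "a0 \<in> Field r"
    and VD: "\<And>a. a \<in> Field r \<Longrightarrow> V a \<subseteq> D a"
    and img: "\<And>a b. (a, b) \<in> r \<Longrightarrow> M a b ` V b = V a"
    and inj: "\<And>a. (a0, a) \<in> r \<Longrightarrow> inj_on (M a0 a) (V a)"
    and v: "v \<in> V a0"
  shows "\<exists>x\<in>set_lim r D M. x a0 = v \<and> (\<forall>a. (a0, a) \<in> r \<longrightarrow> x a \<in> V a)"
proof -
  define x where "x a = inv_into (V a) (M a0 a) v" for a
  have x_above: "x a \<in> V a \<and> M a0 a (x a) = v" if "(a0, a) \<in> r" for a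
    using img[OF that] v by (auto simp: x_def inv_into_into f_inv_into_f)
  have x_unique: "w = x a" if "(a0, a) \<in> r" "w \<in> V a" "M a0 a w = v" for a w
    using inj_onD[OF inj[OF that(1)]] that x_above[OF that(1)] by metis
  have x_in: "x a \<in> D a" if "(a0, a) \<in> r" for a
    using x_above[OF that] VD[OF FieldI2[OF that]] by blast
  have x_compat: "M a b (x b) = x a" if a: "(a0, a) \<in> r" and ab: "(a, b) \<in> r" for a b
  proof -
    have b: "(a0, b) \<in> r" using a ab wo by (auto simp: order_on_defs dest: transD)
    have "M a0 a (M a b (x b)) = v"
      using od a ab x_above[OF b] x_in[OF b] by (auto simp: op_diagram_def)
    moreover have "M a b (x b) \<in> V a"
      using img[OF ab] x_above[OF b] by blast
    ultimately show ?thesis using x_unique[OF a] by blast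
  qed
  have a0a0: "(a0, a0) \<in> r" using wo a0 by (auto simp: order_on_defs refl_on_def)
  have "x a0 = v"
    using x_above[OF a0a0] x_in[OF a0a0] od a0 by (auto simp: op_diagram_def)
  then show ?thesis
    using set_lim_extend_final_segment[OF wo od a0 x_in x_compat] x_above a0 a0a0
    by (intro bexI[of _ "\<lambda>a. if a \<in> Field r then if (a0, a) \<in> r then x a else M a a0 (x a0) else undefined"])
      (auto intro: FieldI2)
qed

lemma set_lim_threads_eventually:
  assumes reg: "regular_ordinal r" and unc: "\<not> countable (Field r)" and od: "op_diagram r D M"
    and VD: "\<And>a. a \<in> Field r \<Longrightarrow> V a \<subseteq> D a" and fin: "\<And>a. a \<in> Field r \<Longrightarrow> finite (V a)"
    and img: "\<And>a b. (a, b) \<in> r \<Longrightarrow> M a b ` V b = V a"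
  obtains a0 \<theta> where "a0 \<in> Field r"
    and "\<And>v. v \<in> V a0 \<Longrightarrow> \<theta> v \<in> set_lim r D M \<and> \<theta> v a0 = v"
    and "\<And>a v. (a0, a) \<in> r \<Longrightarrow> v \<in> V a0 \<Longrightarrow> \<theta> v a \<in> V a"
    and "\<And>a w. (a0, a) \<in> r \<Longrightarrow> w \<in> V a \<Longrightarrow> \<theta> (M a0 a w) a = w"
proof -
  have wo: "Well_order r" using reg by (simp add: regular_ordinal_def limit_ordinal_def)
  have "\<exists>a0\<in>Field r. \<forall>a. (a0, a) \<in> r \<longrightarrow> inj_on (M a0 a) (V a)"
    using reg unc fin img by (rule regular_uncountable_images_eventually_inj)
  then obtain a0 where a0: "a0 \<in> Field r" and inj: "\<And>a. (a0, a) \<in> r \<Longrightarrow> inj_on (M a0 a) (V a)"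
    by blast
  have "\<forall>v\<in>V a0. \<exists>x. x \<in> set_lim r D M \<and> x a0 = v \<and> (\<forall>a. (a0, a) \<in> r \<longrightarrow> x a \<in> V a)"
    using set_lim_thread[OF wo od a0 VD img inj] by blast
  then have "\<exists>\<theta>. \<forall>v\<in>V a0. \<theta> v \<in> set_lim r D M \<and> \<theta> v a0 = v \<and> (\<forall>a. (a0, a) \<in> r \<longrightarrow> \<theta> v a \<in> V a)"
    by (rule bchoice)
  then obtain \<theta> where \<theta>: "\<And>v. v \<in> V a0 \<Longrightarrow>
      \<theta> v \<in> set_lim r D M \<and> \<theta> v a0 = v \<and> (\<forall>a. (a0, a) \<in> r \<longrightarrow> \<theta> v a \<in> V a)"
    by blast
  have \<theta>_M: "\<theta> (M a0 a w) a = w" if a: "(a0, a) \<in> r" and w: "w \<in> V a" for a w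
  proof -
    have Mw: "M a0 a w \<in> V a0" using img[OF a] w by blast
    have "M a0 a (\<theta> (M a0 a w) a) = M a0 a w"
      using set_limD(2)[OF conjunct1[OF \<theta>[OF Mw]] a] \<theta>[OF Mw] by simp
    then show ?thesis
      using inj_onD[OF inj[OF a]] \<theta>[OF Mw] a w by blast
  qed
  show thesis by (rule that[OF a0]) (use \<theta> \<theta>_M in auto)
qed

section \<open>Preservation of \<rho>^op-limits\<close>

definition lim_comparison :: "('f \<Rightarrow> nat) \<Rightarrow> (('f, 'v) tm \<times> ('f, 'v) tm) set \<Rightarrow> 'i rel
    \<Rightarrow> ('i \<Rightarrow> 'c set) \<Rightarrow> ('f, 'i \<Rightarrow> 'c) tm set \<Rightarrow> 'i \<Rightarrow> ('f, 'c) tm set" where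
  "lim_comparison ar E r D c = (\<lambda>a. if a \<in> Field r then Tmap ar E (D a) (\<lambda>x. x a) c else undefined)"

context wf_equations
begin

lemma lim_comparison_cls:
  assumes "s \<in> Tm ar (set_lim r D M)" and "a \<in> Field r"
  shows "lim_comparison ar E r D (cls (set_lim r D M) s) a = cls (D a) (rename_tm (\<lambda>x. x a) s)"
  using assms by (auto simp: lim_comparison_def set_lim_def intro!: Tmap_cls)

lemma lim_comparison_eqI:
  assumes y: "y \<in> set_lim r (\<lambda>a. Tobj ar E (D a)) (\<lambda>a b. Tmap ar E (D a) (M a b))"
    and s: "s \<in> Tm ar (set_lim r D M)"
    and y_a: "\<And>a. a \<in> Field r \<Longrightarrow> y a = cls (D a) (rename_tm (\<lambda>x. x a) s)"
  shows "y = lim_comparison ar E r D (cls (set_lim r D M) s)"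
proof
  fix a
  show "y a = lim_comparison ar E r D (cls (set_lim r D M) s) a"
  proof (cases "a \<in> Field r")
    case True
    then show ?thesis using y_a s by (simp add: lim_comparison_cls)
  next
    case False
    then show ?thesis using set_limD(3)[OF y False] by (simp add: lim_comparison_def)
  qed
qed

lemma lim_comparison_in_set_lim:
  assumes od: "op_diagram r D M" and c: "c \<in> Tobj ar E (set_lim r D M)"
  shows "lim_comparison ar E r D c \<in> set_lim r (\<lambda>a. Tobj ar E (D a)) (\<lambda>a b. Tmap ar E (D a) (M a b))"
proof -
  let ?L = "set_lim r D M"
  obtain s where s: "s \<in> Tm ar ?L" "c = cls ?L s"
    using c by (auto simp: Tobj_iff)
  have s_a: "rename_tm (\<lambda>x. x a) s \<in> Tm ar (D a)" if "a \<in> Field r" for a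
    using s(1) that by (auto intro!: rename_in_Tm simp: Tm_def set_lim_def)
  have "lim_comparison ar E r D c a \<in> Tobj ar E (D a)" if "a \<in> Field r" for a
    using s s_a[OF that] that by (simp add: lim_comparison_cls cls_in_Tobj)
  moreover have "Tmap ar E (D a) (M a b) (lim_comparison ar E r D c b) = lim_comparison ar E r D c a"
    if ab: "(a, b) \<in> r" for a b
  proof -
    have a: "a \<in> Field r" and b: "b \<in> Field r" using ab by (auto intro: FieldI1 FieldI2)
    have "M a b ` D b \<subseteq> D a" using od ab by (auto simp: op_diagram_def)
    then have "Tmap ar E (D a) (M a b) (lim_comparison ar E r D c b)
        = cls (D a) (rename_tm (\<lambda>x. M a b (x b)) s)"
      using s b s_a[OF b] by (simp add: lim_comparison_cls Tmap_cls)
    also have "rename_tm (\<lambda>x. M a b (x b)) s = rename_tm (\<lambda>x. x a) s"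
      using s(1) ab by (intro tm.map_cong0) (auto simp: Tm_def set_lim_def)
    finally show ?thesis using s a by (simp add: lim_comparison_cls)
  qed
  moreover have "lim_comparison ar E r D c a = undefined" if "a \<notin> Field r" for a
    using that by (simp add: lim_comparison_def)
  ultimately show ?thesis by (rule set_limI)
qed

lemma set_lim_Tobj_representatives:
  assumes od: "op_diagram r D M"
    and y: "y \<in> set_lim r (\<lambda>a. Tobj ar E (D a)) (\<lambda>a b. Tmap ar E (D a) (M a b))"
  obtains rep where "\<And>a. a \<in> Field r \<Longrightarrow> rep a \<in> Tm ar (D a) \<and> y a = cls (D a) (rep a)"
    and "\<And>a b. (a, b) \<in> r \<Longrightarrow> (rename_tm (M a b) (rep b), rep a) \<in> teq ar E (D a)"
proof -
  have "\<forall>a\<in>Field r. \<exists>s. s \<in> Tm ar (D a) \<and> y a = cls (D a) s"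
    using y by (auto simp: set_lim_def Tobj_iff)
  then have "\<exists>rep. \<forall>a\<in>Field r. rep a \<in> Tm ar (D a) \<and> y a = cls (D a) (rep a)"
    by (rule bchoice)
  then obtain rep where rep: "\<And>a. a \<in> Field r \<Longrightarrow> rep a \<in> Tm ar (D a) \<and> y a = cls (D a) (rep a)"
    by blast
  have "(rename_tm (M a b) (rep b), rep a) \<in> teq ar E (D a)" if ab: "(a, b) \<in> r" for a b
  proof -
    have a: "a \<in> Field r" and b: "b \<in> Field r" using ab by (auto intro: FieldI1 FieldI2)
    have MD: "M a b ` D b \<subseteq> D a" using od ab by (auto simp: op_diagram_def)
    have "cls (D a) (rename_tm (M a b) (rep b)) = Tmap ar E (D a) (M a b) (y b)"
      using rep[OF b] MD by (simp add: Tmap_cls)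
    also have "\<dots> = cls (D a) (rep a)"
      using y ab rep[OF a] by (simp add: set_lim_def)
    moreover have "rename_tm (M a b) (rep b) \<in> Tm ar (D a)"
      using rep[OF b] MD by (auto intro!: rename_in_Tm simp: Tm_def)
    ultimately show ?thesis
      using rep[OF a] by (simp add: cls_eq_iff)
  qed
  with rep show thesis by (rule that)
qed

end

context nondrop_theory
begin

lemma lim_comparison_inj_on:
  assumes "Well_order r" and "Field r \<noteq> {}"
  shows "inj_on (lim_comparison ar E r D) (Tobj ar E (set_lim r D M))"
proof (rule inj_onI)
  let ?L = "set_lim r D M"
  fix c1 c2
  assume "c1 \<in> Tobj ar E ?L" "c2 \<in> Tobj ar E ?L"
    and eq: "lim_comparison ar E r D c1 = lim_comparison ar E r D c2"
  then obtain s1 s2 where s: "s1 \<in> Tm ar ?L" "c1 = cls ?L s1" "s2 \<in> Tm ar ?L" "c2 = cls ?L s2"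
    by (auto simp: Tobj_iff)
  let ?V = "vars_tm s1 \<union> vars_tm s2"
  have V: "?V \<subseteq> ?L" using s by (auto simp: Tm_def)
  then obtain a where a: "a \<in> Field r" "inj_on (\<lambda>x. x a) ?V"
    using set_lim_inj_on_proj_finite[OF assms] by (metis finite_UnI finite_vars_tm)
  have in_Da: "rename_tm (\<lambda>x. x a) s \<in> Tm ar (D a)" if "s \<in> Tm ar ?L" for s
    using that a(1) by (auto intro!: rename_in_Tm simp: Tm_def set_lim_def)
  have "cls (D a) (rename_tm (\<lambda>x. x a) s1) = cls (D a) (rename_tm (\<lambda>x. x a) s2)"
    using fun_cong[OF eq, of a] s a(1) by (simp add: lim_comparison_cls)
  then have "(rename_tm (\<lambda>x. x a) s1, rename_tm (\<lambda>x. x a) s2) \<in> teq ar E (D a)"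
    using in_Da s by (simp add: cls_eq_iff)
  then have "(s1, s2) \<in> teq ar E ?V"
    using a(2) by (rule teq_rename_inj_reflect) auto
  then have "(s1, s2) \<in> teq ar E ?L"
    by (rule teq_any_carrier) (use V in auto)
  then show "c1 = c2" using s by (simp add: cls_eq_iff)
qed

lemma lim_comparison_surj:
  assumes reg: "regular_ordinal r" and unc: "\<not> countable (Field r)" and od: "op_diagram r D M"
    and y: "y \<in> set_lim r (\<lambda>a. Tobj ar E (D a)) (\<lambda>a b. Tmap ar E (D a) (M a b))"
  shows "y \<in> lim_comparison ar E r D ` Tobj ar E (set_lim r D M)"
proof -
  let ?L = "set_lim r D M"
  obtain rep where rep: "\<And>a. a \<in> Field r \<Longrightarrow> rep a \<in> Tm ar (D a) \<and> y a = cls (D a) (rep a)"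
    and compat: "\<And>a b. (a, b) \<in> r \<Longrightarrow> (rename_tm (M a b) (rep b), rep a) \<in> teq ar E (D a)"
    using set_lim_Tobj_representatives[OF od y] by blast
  have vars_rep: "vars_tm (rep a) \<subseteq> D a" if "a \<in> Field r" for a
    using rep[OF that] by (simp add: Tm_def)
  have vars_img: "M a b ` vars_tm (rep b) = vars_tm (rep a)" if "(a, b) \<in> r" for a b
    using teq_vars[OF compat[OF that]] by simp
  obtain a0 \<theta> where a0: "a0 \<in> Field r"
    and \<theta>: "\<And>v. v \<in> vars_tm (rep a0) \<Longrightarrow> \<theta> v \<in> ?L \<and> \<theta> v a0 = v"
    and \<theta>_above: "\<And>a v. (a0, a) \<in> r \<Longrightarrow> v \<in> vars_tm (rep a0) \<Longrightarrow> \<theta> v a \<in> vars_tm (rep a)"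
    and \<theta>_M: "\<And>a w. (a0, a) \<in> r \<Longrightarrow> w \<in> vars_tm (rep a) \<Longrightarrow> \<theta> (M a0 a w) a = w"
    using set_lim_threads_eventually[OF reg unc od vars_rep finite_vars_tm vars_img] by blast
  define s where "s = rename_tm \<theta> (rep a0)"
  have s: "s \<in> Tm ar ?L" using rep[OF a0] \<theta> by (auto simp: s_def Tm_def)
  have y_a: "y a = cls (D a) (rename_tm (\<lambda>v. \<theta> v a) (rep a0))" if a: "a \<in> Field r" for a
  proof (cases "(a0, a) \<in> r")
    case True
    have "(\<lambda>v. \<theta> v a) ` vars_tm (rename_tm (M a0 a) (rep a)) \<subseteq> D a"
      using vars_img[OF True] \<theta>_above[OF True] vars_rep[OF a] by auto
    from teq_rename_on_vars[OF compat[OF True] this]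
    have "(rename_tm (\<lambda>v. \<theta> v a) (rename_tm (M a0 a) (rep a)), rename_tm (\<lambda>v. \<theta> v a) (rep a0))
        \<in> teq ar E (D a)" .
    moreover have "rename_tm (\<lambda>v. \<theta> v a) (rename_tm (M a0 a) (rep a)) = rep a"
      by (simp add: \<theta>_M[OF True] tm.map_ident_strong)
    ultimately show ?thesis
      using rep[OF a] equiv_class_eq[OF equiv_teq] by simp
  next
    case False
    then have a_a0: "(a, a0) \<in> r"
      using reg a a0 by (meson wo_rel.TOTALS wo_rel.intro regular_ordinal_def limit_ordinal_def)
    have "\<theta> v a = M a a0 v" if "v \<in> vars_tm (rep a0)" for v
      using set_limD(2)[OF conjunct1[OF \<theta>[OF that]] a_a0] \<theta>[OF that] by simp
    then have "rename_tm (\<lambda>v. \<theta> v a) (rep a0) = rename_tm (M a a0) (rep a0)"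
      by (intro tm.map_cong0) auto
    also have "cls (D a) \<dots> = Tmap ar E (D a) (M a a0) (y a0)"
      using rep[OF a0] od a_a0 by (simp add: Tmap_cls op_diagram_def image_subset_iff)
    also have "\<dots> = y a"
      using set_limD(2)[OF y a_a0] .
    finally show ?thesis by simp
  qed
  have "y = lim_comparison ar E r D (cls ?L s)"
    by (rule lim_comparison_eqI[OF y s]) (simp add: s_def y_a)
  then show ?thesis using cls_in_Tobj[OF s] by blast
qed

theorem bij_betw_lim_comparison:
  assumes "regular_ordinal r" and "\<not> countable (Field r)" and "op_diagram r D M"
  shows "bij_betw (lim_comparison ar E r D) (Tobj ar E (set_lim r D M))
           (set_lim r (\<lambda>a. Tobj ar E (D a)) (\<lambda>a b. Tmap ar E (D a) (M a b)))"
proof -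
  have "Well_order r" "Field r \<noteq> {}"
    using assms(1,2) by (auto simp: regular_ordinal_def limit_ordinal_def)
  then show ?thesis
    using assms lim_comparison_inj_on lim_comparison_in_set_lim lim_comparison_surj
    by (auto simp: bij_betw_def)
qed

end

theorem mainTheorem2:
  fixes ar :: "'f \<Rightarrow> nat"
    and E :: "(('f, 'v) tm \<times> ('f, 'v) tm) set"
  assumes eqs_wf: "\<forall>(l, r) \<in> E. wf_tm ar l \<and> wf_tm ar r"
    and no_drop: "\<forall>e \<in> E. \<not> drop_equation e"
  shows
    \<comment> \<open>T preserves pullbacks of an inclusion Z \<subseteq> Y along any f : X \<rightarrow> Y\<close>
    "(\<forall>(X :: 'x set) (Y :: 'y set) Z f. f ` X \<subseteq> Y \<longrightarrow> Z \<subseteq> Y \<longrightarrow>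
        (let P = {x \<in> X. f x \<in> Z} in
         bij_betw (\<lambda>c. (Tmap ar E X id c, Tmap ar E Z f c)) (Tobj ar E P)
           {(a, b). a \<in> Tobj ar E X \<and> b \<in> Tobj ar E Z \<and> Tmap ar E Y f a = Tmap ar E Y id b}))
   \<and> \<comment> \<open>in particular T preserves monomorphisms\<close>
    (\<forall>(X :: 'a set) (Y :: 'b set) g. g ` X \<subseteq> Y \<longrightarrow> inj_on g X \<longrightarrow>
        inj_on (Tmap ar E Y g) (Tobj ar E X))
   \<and> \<comment> \<open>T preserves \<rho>^op-indexed limits for uncountable regular \<rho>\<close>
    (\<forall>(r :: 'i rel) (D :: 'i \<Rightarrow> 'c set) M.
        regular_ordinal r \<longrightarrow> \<not> countable (Field r) \<longrightarrow> op_diagram r D M \<longrightarrow>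
        bij_betw (\<lambda>c a. if a \<in> Field r then Tmap ar E (D a) (\<lambda>x. x a) c else undefined)
          (Tobj ar E (set_lim r D M))
          (set_lim r (\<lambda>a. Tobj ar E (D a)) (\<lambda>a b. Tmap ar E (D a) (M a b))))"
proof -
  interpret nondrop_theory ar E
    using eqs_wf no_drop by (simp add: nondrop_theory_def nondrop_theory_axioms_def wf_equations_def)
  show ?thesis
    using Tmap_pullback Tmap_inj_on bij_betw_lim_comparison[unfolded lim_comparison_def]
    by (intro conjI allI impI) (simp_all add: Let_def)
qed

end
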